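(* The category $\mathbf{ProLam}$ is the limit of the codirected diagram of cartesian closed categories $Q \mapsto \mathbf{Lam}_Q$, $(f \colon Q \twoheadrightarrow Q') \mapsto \mathbf{Lam}_f$, indexed by finite sets and partial surjections, with limit projection functors $\pi_Q \colon \mathbf{ProLam} \to \mathbf{Lam}_Q$ that are the identity on objects and send a morphism $\theta \in \mathbf{ProLam}(A,B) = \widehat{\Lambda}(A\Rightarrow B)$ to the element of $\mathbf{Lam}_Q(A,B)$ corresponding to $\theta_Q$ under the bijection $\mathbf{Lam}_Q(A,B) \cong D_Q(A \Rightarrow B)$, $[M] \mapsto [\![M]\!]_Q$.
   Context: Simple types are built from a base type $o$ (with the type constructors of the simply typed $\lambda$-calculus, so that $\mathbf{Lam}$ is the free cartesian closed category on one object). $\Lambda(A)$: closed terms of type $A$ modulo $\beta\eta$; $\mathbf{Lam}$ has simple types as objects and $\mathbf{Lam}(A,B)=\Lambda(A\Rightarrow B)$. For a finite set $Q$, $[\![-]\!]_Q$ is the standard interpretation in finite sets ($[\![o]\!]_Q = Q$, $[\![A\Rightarrow B]\!]_Q$ all functions); $D_Q(A) = \{[\![M]\!]_Q : M\in\Lambda(A)\}$. $M\sim_Q N$ iff $[\![M]\!]_Q = [\![N]\!]_Q$; $\mathbf{Lam}_Q = \mathbf{Lam}/\sim_Q$, a cartesian closed category. A partial surjection $f\colon Q\twoheadrightarrow Q'$ is a relation that is the graph of a partial function surjective onto $Q'$; it induces the identity-on-objects cartesian closed functor $\mathbf{Lam}_f\colon\mathbf{Lam}_Q\to\mathbf{Lam}_{Q'}$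 sending the $\sim_Q$-class of $M$ to its $\sim_{Q'}$-class. Logical relations: for $R\subseteq Q\times Q'$, $[\![o]\!]_R = R$, $[\![A\Rightarrow B]\!]_R = \{(g,h) : \forall (x,y)\in[\![A]\!]_R,\ (g(x),h(y))\in[\![B]\!]_R\}$. A profinite $\lambda$-term of type $A$ is a family $(\theta_Q)$ over finite sets with $\theta_Q\in D_Q(A)$ and $(\theta_Q,\theta_{Q'})\in[\![A]\!]_f$ for every partial surjection $f\colon Q\twoheadrightarrow Q'$; $\widehat{\Lambda}(A)$ is their set. $\mathbf{ProLam}$ has simple types as objects, $\mathbf{ProLam}(A,B)=\widehat{\Lambda}(A\Rightarrow B)$, and componentwise composition $(\psi\circ\theta)_Q = \psi_Q\circ\theta_Q$. *)

theory Defs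
  imports Main "HOL-Library.FSet"
begin

datatype sty = TO | TUnit | TProd sty sty | TArr sty sty

text \<open>Church-style terms with de Bruijn indices.\<close>
datatype tm = Var nat | Lam sty tm | App tm tm | Pair tm tm | Fst tm | Snd tm | Star

inductive typing :: "sty list \<Rightarrow> tm \<Rightarrow> sty \<Rightarrow> bool" where
  t_var: "i < length \<Gamma> \<Longrightarrow> typing \<Gamma> (Var i) (\<Gamma> ! i)"
| t_lam: "typing (A # \<Gamma>) M B \<Longrightarrow> typing \<Gamma> (Lam A M) (TArr A B)"
| t_app: "typing \<Gamma> M (TArr A B) \<Longrightarrow> typing \<Gamma> N A \<Longrightarrow> typing \<Gamma> (App M N) B"
| t_pair: "typing \<Gamma> M A \<Longrightarrow> typing \<Gamma> N B \<Longrightarrow> typing \<Gamma> (Pair M N) (TProd A B)"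
| t_fst: "typing \<Gamma> M (TProd A B) \<Longrightarrow> typing \<Gamma> (Fst M) A"
| t_snd: "typing \<Gamma> M (TProd A B) \<Longrightarrow> typing \<Gamma> (Snd M) B"
| t_star: "typing \<Gamma> Star TUnit"

text \<open>Closed terms of type A (raw; beta-eta is subsumed by the semantic quotients below).\<close>
definition closed_tms :: "sty \<Rightarrow> tm set" where
  "closed_tms A = {M. typing [] M A}"

text \<open>Semantic values; functions are represented by their (finite) graphs.\<close>
datatype val = Atom nat | UnitV | PairV val val | Graph "(val \<times> val) fset"

fun vfst :: "val \<Rightarrow> val" where
  "vfst (PairV x y) = x"
| "vfst _ = undefined"

fun vsnd :: "val \<Rightarrow> val" where
  "vsnd (PairV x y) = y"
| "vsnd _ = undefined"

fun vapp :: "val \<Rightarrow> val \<Rightarrow> val" where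
  "vapp (Graph G) x = (THE y. (x, y) |\<in>| G)"
| "vapp _ x = undefined"

primrec semdom :: "nat set \<Rightarrow> sty \<Rightarrow> val set" where
  "semdom Q TO = Atom ` Q"
| "semdom Q TUnit = {UnitV}"
| "semdom Q (TProd A B) = {PairV x y | x y. x \<in> semdom Q A \<and> y \<in> semdom Q B}"
| "semdom Q (TArr A B) = {Graph G | G. fset G \<subseteq> semdom Q A \<times> semdom Q B \<and>
                                     (\<forall>x\<in>semdom Q A. \<exists>!y. (x, y) |\<in>| G)}"

definition graph_of :: "nat set \<Rightarrow> sty \<Rightarrow> (val \<Rightarrow> val) \<Rightarrow> val" where
  "graph_of Q A f = Graph (Abs_fset ((\<lambda>x. (x, f x)) ` semdom Q A))"

primrec sem :: "nat set \<Rightarrow> val list \<Rightarrow> tm \<Rightarrow> val" where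
  "sem Q \<rho> (Var i) = \<rho> ! i"
| "sem Q \<rho> (Lam A M) = graph_of Q A (\<lambda>x. sem Q (x # \<rho>) M)"
| "sem Q \<rho> (App M N) = vapp (sem Q \<rho> M) (sem Q \<rho> N)"
| "sem Q \<rho> (Pair M N) = PairV (sem Q \<rho> M) (sem Q \<rho> N)"
| "sem Q \<rho> (Fst M) = vfst (sem Q \<rho> M)"
| "sem Q \<rho> (Snd M) = vsnd (sem Q \<rho> M)"
| "sem Q \<rho> Star = UnitV"

definition interp :: "nat set \<Rightarrow> tm \<Rightarrow> val" where
  "interp Q M = sem Q [] M"

definition Dsem :: "nat set \<Rightarrow> sty \<Rightarrow> val set" where
  "Dsem Q A = interp Q ` closed_tms A"

definition partial_surj :: "nat set \<Rightarrow> nat set \<Rightarrow> (nat \<times> nat) set \<Rightarrow> bool" where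
  "partial_surj Q Q' R \<longleftrightarrow> R \<subseteq> Q \<times> Q' \<and>
     (\<forall>x y z. (x, y) \<in> R \<longrightarrow> (x, z) \<in> R \<longrightarrow> y = z) \<and> (\<forall>y\<in>Q'. \<exists>x. (x, y) \<in> R)"

primrec lrel :: "nat set \<Rightarrow> nat set \<Rightarrow> (nat \<times> nat) set \<Rightarrow> sty \<Rightarrow> (val \<times> val) set" where
  "lrel Q Q' R TO = {(Atom x, Atom y) | x y. (x, y) \<in> R}"
| "lrel Q Q' R TUnit = {(UnitV, UnitV)}"
| "lrel Q Q' R (TProd A B) = {(PairV a b, PairV c d) | a b c d.
                                (a, c) \<in> lrel Q Q' R A \<and> (b, d) \<in> lrel Q Q' R B}"
| "lrel Q Q' R (TArr A B) = {(g, h). g \<in> semdom Q (TArr A B) \<and> h \<in> semdom Q' (TArr A B) \<and>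
                              (\<forall>(x, y) \<in> lrel Q Q' R A. (vapp g x, vapp h y) \<in> lrel Q Q' R B)}"

text \<open>Families indexed by finite sets (finite subsets of nat), normalised to undefined elsewhere.\<close>
definition profinite :: "sty \<Rightarrow> (nat set \<Rightarrow> val) \<Rightarrow> bool" where
  "profinite A \<theta> \<longleftrightarrow> (\<forall>Q. \<not> finite Q \<longrightarrow> \<theta> Q = undefined) \<and>
     (\<forall>Q. finite Q \<longrightarrow> \<theta> Q \<in> Dsem Q A) \<and>
     (\<forall>Q Q' R. finite Q \<longrightarrow> finite Q' \<longrightarrow> partial_surj Q Q' R \<longrightarrow> (\<theta> Q, \<theta> Q') \<in> lrel Q Q' R A)"

definition ProLam_hom :: "sty \<Rightarrow> sty \<Rightarrow> (nat set \<Rightarrow> val) set" where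
  "ProLam_hom A B = {\<theta>. profinite (TArr A B) \<theta>}"

definition pro_comp :: "sty \<Rightarrow> (nat set \<Rightarrow> val) \<Rightarrow> (nat set \<Rightarrow> val) \<Rightarrow> (nat set \<Rightarrow> val)" where
  "pro_comp A \<theta> \<psi> = (\<lambda>Q. if finite Q then graph_of Q A (\<lambda>x. vapp (\<psi> Q) (vapp (\<theta> Q) x)) else undefined)"

definition pro_id :: "sty \<Rightarrow> (nat set \<Rightarrow> val)" where
  "pro_id A = (\<lambda>Q. if finite Q then graph_of Q A (\<lambda>x. x) else undefined)"

definition simrel :: "nat set \<Rightarrow> sty \<Rightarrow> (tm \<times> tm) set" where
  "simrel Q T = {(M, N). typing [] M T \<and> typing [] N T \<and> interp Q M = interp Q N}"

definition lamcls :: "nat set \<Rightarrow> sty \<Rightarrow> tm \<Rightarrow> tm set" where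
  "lamcls Q T M = simrel Q T `` {M}"

definition lam_hom :: "nat set \<Rightarrow> sty \<Rightarrow> sty \<Rightarrow> tm set set" where
  "lam_hom Q A B = closed_tms (TArr A B) // simrel Q (TArr A B)"

definition tcomp :: "sty \<Rightarrow> tm \<Rightarrow> tm \<Rightarrow> tm" where
  "tcomp A N M = Lam A (App N (App M (Var 0)))"

definition lam_comp :: "nat set \<Rightarrow> sty \<Rightarrow> sty \<Rightarrow> sty \<Rightarrow> tm set \<Rightarrow> tm set \<Rightarrow> tm set" where
  "lam_comp Q A B C X Y = lamcls Q (TArr A C) (tcomp A (SOME N. N \<in> Y) (SOME M. M \<in> X))"

definition lam_id :: "nat set \<Rightarrow> sty \<Rightarrow> tm set" where
  "lam_id Q A = lamcls Q (TArr A A) (Lam A (Var 0))"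

text \<open>Lam_f (for f : Q ->> Q'): the ~_Q class of M goes to the ~_Q' class of M.\<close>
definition lam_f :: "nat set \<Rightarrow> sty \<Rightarrow> tm set \<Rightarrow> tm set" where
  "lam_f Q' T X = lamcls Q' T (SOME M. M \<in> X)"

definition pi_proj :: "nat set \<Rightarrow> sty \<Rightarrow> (nat set \<Rightarrow> val) \<Rightarrow> tm set" where
  "pi_proj Q T \<theta> = {M. typing [] M T \<and> interp Q M = \<theta> Q}"

end

(*
  The projections are jointly injective because theta_Q is recovered from its class of
  realizers, the closed terms M with [[M]]_Q = theta_Q.  The heart of the matter is that
  such a realizer keeps realizing theta along every partial surjection f : Q ->> Q':
  the logical relation [[T]]_f of a partial surjection is again the graph of a partial
  surjection at every type T, while the fundamental lemma relates [[M]]_Q to [[M]]_Q' and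
  profiniteness relates theta_Q to theta_Q', so [[M]]_Q' = theta_Q'.  Hence composites and
  identities of profinite terms are realized by the composition and identity terms, the
  projections commute with Lam_f, and a compatible family of classes glues, through any
  choice of representatives, to a unique profinite term.
*)

theory Submission
  imports Defs
begin

lemma finite_semdom: "finite Q \<Longrightarrow> finite (semdom Q T)"
proof (induction T)
  case (TProd A B)
  have "semdom Q (TProd A B) = case_prod PairV ` (semdom Q A \<times> semdom Q B)" by auto
  with TProd show ?case by simp
next
  case (TArr A B)
  have "semdom Q (TArr A B) \<subseteq> Graph ` Abs_fset ` Pow (semdom Q A \<times> semdom Q B)"
  proof
    fix g assume "g \<in> semdom Q (TArr A B)"
    then obtain G where "g = Graph G" "fset G \<subseteq> semdom Q A \<times> semdom Q B" by auto
    then show "g \<in> Graph ` Abs_fset ` Pow (semdom Q A \<times> semdom Q B)"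
      by (metis Pow_iff fset_inverse image_eqI)
  qed
  with TArr show ?case by (meson finite_Pow_iff finite_SigmaI finite_imageI finite_subset)
qed simp_all

lemma fset_graph_of:
  "finite Q \<Longrightarrow> fset (Abs_fset ((\<lambda>x. (x, f x)) ` semdom Q A)) = (\<lambda>x. (x, f x)) ` semdom Q A"
  by (simp add: Abs_fset_inverse finite_semdom)

lemma vapp_graph_of: "finite Q \<Longrightarrow> x \<in> semdom Q A \<Longrightarrow> vapp (graph_of Q A f) x = f x"
  by (auto simp: graph_of_def fset_graph_of image_iff)

lemma graph_of_in_semdom:
  "finite Q \<Longrightarrow> (\<And>x. x \<in> semdom Q A \<Longrightarrow> f x \<in> semdom Q B) \<Longrightarrow> graph_of Q A f \<in> semdom Q (TArr A B)"
  by (auto simp: graph_of_def fset_graph_of)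

lemma mem_graph_iff_vapp:
  assumes "g \<in> semdom Q (TArr A B)" "g = Graph G" "x \<in> semdom Q A"
  shows "(x, y) |\<in>| G \<longleftrightarrow> vapp g x = y"
proof -
  have unique: "\<exists>!y. (x, y) |\<in>| G" using assms by simp
  show ?thesis
  proof
    assume "(x, y) |\<in>| G"
    then show "vapp g x = y" using unique \<open>g = Graph G\<close> by (simp add: the1_equality)
  next
    assume "vapp g x = y"
    then show "(x, y) |\<in>| G" using theI'[OF unique] \<open>g = Graph G\<close> by simp
  qed
qed

lemma vapp_in_semdom:
  assumes "g \<in> semdom Q (TArr A B)" "x \<in> semdom Q A"
  shows "vapp g x \<in> semdom Q B"
proof -
  obtain G where G: "g = Graph G" "fset G \<subseteq> semdom Q A \<times> semdom Q B" using assms(1) by auto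
  with assms mem_graph_iff_vapp have "(x, vapp g x) |\<in>| G" by blast
  with G(2) show ?thesis by blast
qed

lemma semdom_arr_ext:
  assumes "g \<in> semdom Q (TArr A B)" "h \<in> semdom Q (TArr A B)"
    and "\<And>x. x \<in> semdom Q A \<Longrightarrow> vapp g x = vapp h x"
  shows "g = h"
proof -
  have graph: "fset G = (\<lambda>x. (x, vapp g x)) ` semdom Q A"
    if g: "g \<in> semdom Q (TArr A B)" "g = Graph G" for g G
  proof (intro equalityI subsetI)
    fix p assume "p \<in> fset G"
    moreover have "fset G \<subseteq> semdom Q A \<times> semdom Q B" using g by simp
    ultimately obtain x y where p: "p = (x, y)" "x \<in> semdom Q A" "(x, y) |\<in>| G" by blast
    then have "vapp g x = y" using mem_graph_iff_vapp[OF g] by blast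
    with p(1,2) show "p \<in> (\<lambda>x. (x, vapp g x)) ` semdom Q A" by blast
  next
    fix p assume "p \<in> (\<lambda>x. (x, vapp g x)) ` semdom Q A"
    then show "p \<in> fset G" using mem_graph_iff_vapp[OF g] by blast
  qed
  obtain G H where G: "g = Graph G" and H: "h = Graph H" using assms(1,2) by auto
  have "fset G = (\<lambda>x. (x, vapp g x)) ` semdom Q A" using graph[OF assms(1) G] .
  also have "\<dots> = (\<lambda>x. (x, vapp h x)) ` semdom Q A" using assms(3) by (simp cong: image_cong)
  also have "\<dots> = fset H" using graph[OF assms(2) H] by (rule sym)
  finally show ?thesis using G H by (simp add: fset_inject)
qed

lemma semdom_nonempty: "Q \<noteq> {} \<Longrightarrow> finite Q \<Longrightarrow> semdom Q T \<noteq> {}"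
proof (induction T)
  case (TArr A B)
  then obtain b where "b \<in> semdom Q B" by blast
  then have "graph_of Q A (\<lambda>_. b) \<in> semdom Q (TArr A B)" by (rule graph_of_in_semdom[OF TArr.prems(2)])
  then show ?case by blast
qed auto

section \<open>Soundness of typing and the fundamental lemma\<close>

lemma typing_append: "typing \<Gamma> M T \<Longrightarrow> typing (\<Gamma> @ \<Delta>) M T"
proof (induction rule: typing.induct)
  case (t_var i \<Gamma>)
  then show ?case using typing.t_var[of i "\<Gamma> @ \<Delta>"] by (simp add: nth_append)
qed (auto intro: typing.intros)

lemma sem_cong_env:
  "typing \<Gamma> M T \<Longrightarrow> \<forall>i<length \<Gamma>. \<rho> ! i = \<rho>' ! i \<Longrightarrow> sem Q \<rho> M = sem Q \<rho>' M"
proof (induction arbitrary: \<rho> \<rho>' rule: typing.induct)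
  case (t_lam A \<Gamma> M B)
  have "sem Q (x # \<rho>) M = sem Q (x # \<rho>') M" for x
    using t_lam.IH[of "x # \<rho>" "x # \<rho>'"] t_lam.prems by (simp add: nth_Cons split: nat.split)
  then show ?case by simp
next
  case (t_app \<Gamma> M A B N)
  show ?case using t_app.IH[OF t_app.prems] by simp
next
  case (t_pair \<Gamma> M A N B)
  show ?case using t_pair.IH[OF t_pair.prems] by simp
next
  case (t_fst \<Gamma> M A B)
  show ?case using t_fst.IH[OF t_fst.prems] by simp
next
  case (t_snd \<Gamma> M A B)
  show ?case using t_snd.IH[OF t_snd.prems] by simp
qed simp_all

lemma sem_closed: "typing [] M T \<Longrightarrow> sem Q \<rho> M = interp Q M"
  unfolding interp_def using sem_cong_env[of "[]" M T] by simp

lemma sem_in_semdom: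
  assumes "finite Q"
  shows "typing \<Gamma> M T \<Longrightarrow> (\<And>i. i < length \<Gamma> \<Longrightarrow> \<rho> ! i \<in> semdom Q (\<Gamma> ! i)) \<Longrightarrow>
    sem Q \<rho> M \<in> semdom Q T"
proof (induction arbitrary: \<rho> rule: typing.induct)
  case (t_lam A \<Gamma> M B)
  have "sem Q (x # \<rho>) M \<in> semdom Q B" if "x \<in> semdom Q A" for x
    using t_lam.prems that by (intro t_lam.IH) (auto simp: nth_Cons split: nat.split)
  then show ?case unfolding sem.simps by (rule graph_of_in_semdom[OF assms])
next
  case (t_app \<Gamma> M A B N)
  from vapp_in_semdom[OF t_app.IH(1)[OF t_app.prems] t_app.IH(2)[OF t_app.prems]]
  show ?case by simp
next
  case (t_fst \<Gamma> M A B)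
  from t_fst.IH[OF t_fst.prems] show ?case by auto
next
  case (t_snd \<Gamma> M A B)
  from t_snd.IH[OF t_snd.prems] show ?case by auto
qed simp_all

lemma lrel_in_semdom:
  "partial_surj Q Q' R \<Longrightarrow> (x, y) \<in> lrel Q Q' R T \<Longrightarrow> x \<in> semdom Q T \<and> y \<in> semdom Q' T"
  by (induction T arbitrary: x y) (auto simp: partial_surj_def)

lemma lrel_arr_vapp:
  "(g, h) \<in> lrel Q Q' R (TArr A B) \<Longrightarrow> (x, y) \<in> lrel Q Q' R A \<Longrightarrow> (vapp g x, vapp h y) \<in> lrel Q Q' R B"
  by (simp only: lrel.simps) blast

lemma lrel_arrI:
  "g \<in> semdom Q (TArr A B) \<Longrightarrow> h \<in> semdom Q' (TArr A B) \<Longrightarrow>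
   (\<And>x y. (x, y) \<in> lrel Q Q' R A \<Longrightarrow> (vapp g x, vapp h y) \<in> lrel Q Q' R B) \<Longrightarrow>
   (g, h) \<in> lrel Q Q' R (TArr A B)"
  by (simp only: lrel.simps) blast

lemma lrel_sem:
  assumes "finite Q" "finite Q'" "partial_surj Q Q' R"
  shows "typing \<Gamma> M T \<Longrightarrow> (\<And>i. i < length \<Gamma> \<Longrightarrow> (\<rho> ! i, \<rho>' ! i) \<in> lrel Q Q' R (\<Gamma> ! i)) \<Longrightarrow>
    (sem Q \<rho> M, sem Q' \<rho>' M) \<in> lrel Q Q' R T"
proof (induction arbitrary: \<rho> \<rho>' rule: typing.induct)
  case (t_lam A \<Gamma> M B)
  have env: "\<rho> ! i \<in> semdom Q (\<Gamma> ! i)" "\<rho>' ! i \<in> semdom Q' (\<Gamma> ! i)" if "i < length \<Gamma>" for i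
    using lrel_in_semdom[OF assms(3) t_lam.prems[OF that]] by blast+
  show ?case
  proof (rule lrel_arrI)
    show "sem Q \<rho> (Lam A M) \<in> semdom Q (TArr A B)"
      using sem_in_semdom[OF assms(1) typing.t_lam[OF t_lam.hyps]] env(1) by blast
    show "sem Q' \<rho>' (Lam A M) \<in> semdom Q' (TArr A B)"
      using sem_in_semdom[OF assms(2) typing.t_lam[OF t_lam.hyps]] env(2) by blast
  next
    fix x y assume xy: "(x, y) \<in> lrel Q Q' R A"
    have "(sem Q (x # \<rho>) M, sem Q' (y # \<rho>') M) \<in> lrel Q Q' R B"
      using t_lam.prems xy by (intro t_lam.IH) (auto simp: nth_Cons split: nat.split)
    then show "(vapp (sem Q \<rho> (Lam A M)) x, vapp (sem Q' \<rho>' (Lam A M)) y) \<in> lrel Q Q' R B"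
      using lrel_in_semdom[OF assms(3) xy] by (simp add: vapp_graph_of assms)
  qed
next
  case (t_app \<Gamma> M A B N)
  from lrel_arr_vapp[OF t_app.IH[OF t_app.prems]] show ?case by simp
next
  case (t_fst \<Gamma> M A B)
  from t_fst.IH[OF t_fst.prems] show ?case by auto
next
  case (t_snd \<Gamma> M A B)
  from t_snd.IH[OF t_snd.prems] show ?case by auto
qed simp_all

lemma lrel_interp:
  "finite Q \<Longrightarrow> finite Q' \<Longrightarrow> partial_surj Q Q' R \<Longrightarrow> typing [] M T \<Longrightarrow>
   (interp Q M, interp Q' M) \<in> lrel Q Q' R T"
  unfolding interp_def using lrel_sem[of Q Q' R "[]" M T] by simp

section \<open>Logical relations of partial surjections are partial surjections\<close>

lemma single_valued_lrel_TArr: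
  assumes "partial_surj Q Q' R"
    and "semdom Q' A \<subseteq> Range (lrel Q Q' R A)" and "single_valued (lrel Q Q' R B)"
  shows "single_valued (lrel Q Q' R (TArr A B))"
proof (rule single_valuedI)
  fix g h h' assume gh: "(g, h) \<in> lrel Q Q' R (TArr A B)" and gh': "(g, h') \<in> lrel Q Q' R (TArr A B)"
  show "h = h'"
  proof (rule semdom_arr_ext)
    show "h \<in> semdom Q' (TArr A B)" "h' \<in> semdom Q' (TArr A B)"
      using lrel_in_semdom[OF assms(1) gh] lrel_in_semdom[OF assms(1) gh'] by blast+
  next
    fix y assume "y \<in> semdom Q' A"
    with assms(2) obtain x where xy: "(x, y) \<in> lrel Q Q' R A" by blast
    show "vapp h y = vapp h' y"
      using assms(3) lrel_arr_vapp[OF gh xy] lrel_arr_vapp[OF gh' xy] by (rule single_valuedD)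
  qed
qed

lemma Range_lrel_TArr:
  assumes "finite Q" "partial_surj Q Q' R"
    and "single_valued (lrel Q Q' R A)" and "semdom Q' B \<subseteq> Range (lrel Q Q' R B)"
  shows "semdom Q' (TArr A B) \<subseteq> Range (lrel Q Q' R (TArr A B))"
proof
  fix h assume h: "h \<in> semdom Q' (TArr A B)"
  \<comment> \<open>the preimage of \<open>h\<close> sends \<open>x\<close> to a preimage of \<open>h y\<close>, for the unique \<open>y\<close> related to \<open>x\<close>, if any\<close>
  let ?P = "\<lambda>x b. b \<in> semdom Q B \<and> (\<forall>y. (x, y) \<in> lrel Q Q' R A \<longrightarrow> (b, vapp h y) \<in> lrel Q Q' R B)"
  have ex: "\<exists>b. ?P x b" if x: "x \<in> semdom Q A" for x
  proof (cases "\<exists>y. (x, y) \<in> lrel Q Q' R A")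
    case True
    then obtain y where xy: "(x, y) \<in> lrel Q Q' R A" by blast
    then have "vapp h y \<in> semdom Q' B"
      using vapp_in_semdom[OF h] lrel_in_semdom[OF assms(2)] by blast
    with assms(4) obtain b where b: "(b, vapp h y) \<in> lrel Q Q' R B" by blast
    have "y' = y" if "(x, y') \<in> lrel Q Q' R A" for y'
      using assms(3) that xy by (rule single_valuedD)
    with b show ?thesis using lrel_in_semdom[OF assms(2) b] by blast
  next
    case False
    have "semdom Q B \<noteq> {}"
    proof (cases "Q = {}")
      case True
      \<comment> \<open>then \<open>Q' = Q\<close>, so \<open>h\<close> itself maps \<open>x\<close> into \<open>semdom Q B\<close>\<close>
      with assms(2) have "Q' = Q" by (auto simp: partial_surj_def)
      with vapp_in_semdom[OF h] x show ?thesis by blast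
    next
      case False
      show ?thesis using False assms(1) by (rule semdom_nonempty)
    qed
    with False show ?thesis by blast
  qed
  have f: "?P x (SOME b. ?P x b)" if "x \<in> semdom Q A" for x
    using ex[OF that] by (rule someI_ex)
  have "(graph_of Q A (\<lambda>x. SOME b. ?P x b), h) \<in> lrel Q Q' R (TArr A B)"
  proof (rule lrel_arrI[OF _ h])
    show "graph_of Q A (\<lambda>x. SOME b. ?P x b) \<in> semdom Q (TArr A B)"
      using f by (blast intro: graph_of_in_semdom[OF assms(1)])
  next
    fix x y assume xy: "(x, y) \<in> lrel Q Q' R A"
    then have x: "x \<in> semdom Q A" using lrel_in_semdom[OF assms(2)] by blast
    show "(vapp (graph_of Q A (\<lambda>x. SOME b. ?P x b)) x, vapp h y) \<in> lrel Q Q' R B"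
      using f[OF x] xy by (simp add: vapp_graph_of[OF assms(1) x])
  qed
  then show "h \<in> Range (lrel Q Q' R (TArr A B))" by blast
qed

lemma single_valued_Range_lrel:
  assumes "finite Q" "partial_surj Q Q' R"
  shows "single_valued (lrel Q Q' R T) \<and> semdom Q' T \<subseteq> Range (lrel Q Q' R T)"
proof (induction T)
  case TO
  have "single_valued (lrel Q Q' R TO)"
    using assms(2) by (auto simp: partial_surj_def single_valued_def)
  moreover have "semdom Q' TO \<subseteq> Range (lrel Q Q' R TO)"
  proof
    fix v assume "v \<in> semdom Q' TO"
    then obtain y where y: "v = Atom y" "y \<in> Q'" by auto
    with assms(2) obtain x where "(x, y) \<in> R" unfolding partial_surj_def by blast
    with y(1) show "v \<in> Range (lrel Q Q' R TO)" by auto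
  qed
  ultimately show ?case ..
next
  case (TProd A B)
  then have sv: "single_valued (lrel Q Q' R A)" "single_valued (lrel Q Q' R B)"
    and rg: "semdom Q' A \<subseteq> Range (lrel Q Q' R A)" "semdom Q' B \<subseteq> Range (lrel Q Q' R B)"
    by blast+
  have "single_valued (lrel Q Q' R (TProd A B))"
  proof (rule single_valuedI)
    fix x y z assume "(x, y) \<in> lrel Q Q' R (TProd A B)" "(x, z) \<in> lrel Q Q' R (TProd A B)"
    then obtain a b c d c' d' where "x = PairV a b" "y = PairV c d" "z = PairV c' d'"
      "(a, c) \<in> lrel Q Q' R A" "(b, d) \<in> lrel Q Q' R B"
      "(a, c') \<in> lrel Q Q' R A" "(b, d') \<in> lrel Q Q' R B"
      by auto
    with sv show "y = z" by (metis single_valuedD)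
  qed
  moreover have "semdom Q' (TProd A B) \<subseteq> Range (lrel Q Q' R (TProd A B))"
  proof
    fix v assume "v \<in> semdom Q' (TProd A B)"
    then obtain c d where v: "v = PairV c d" "c \<in> semdom Q' A" "d \<in> semdom Q' B" by auto
    with rg obtain a b where "(a, c) \<in> lrel Q Q' R A" "(b, d) \<in> lrel Q Q' R B" by blast
    with v(1) have "(PairV a b, v) \<in> lrel Q Q' R (TProd A B)" by simp
    then show "v \<in> Range (lrel Q Q' R (TProd A B))" by (rule RangeI)
  qed
  ultimately show ?case ..
next
  case (TArr A B)
  then have "single_valued (lrel Q Q' R A)" "semdom Q' A \<subseteq> Range (lrel Q Q' R A)"
    "single_valued (lrel Q Q' R B)" "semdom Q' B \<subseteq> Range (lrel Q Q' R B)"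
    by blast+
  with single_valued_lrel_TArr[OF assms(2)] Range_lrel_TArr[OF assms] show ?case by blast
qed (simp add: single_valued_def)

lemma single_valued_lrel: "finite Q \<Longrightarrow> partial_surj Q Q' R \<Longrightarrow> single_valued (lrel Q Q' R T)"
  using single_valued_Range_lrel by blast

lemma mem_pi_proj: "M \<in> pi_proj Q T \<theta> \<longleftrightarrow> typing [] M T \<and> interp Q M = \<theta> Q"
  by (simp add: pi_proj_def)

lemma Dsem_iff_pi_proj_nonempty: "\<theta> Q \<in> Dsem Q T \<longleftrightarrow> pi_proj Q T \<theta> \<noteq> {}"
  by (auto simp: Dsem_def closed_tms_def pi_proj_def image_iff)

lemma pi_proj_eq_lamcls: "M \<in> pi_proj Q T \<theta> \<Longrightarrow> pi_proj Q T \<theta> = lamcls Q T M"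
  by (auto simp: pi_proj_def lamcls_def simrel_def)

lemma profiniteD:
  assumes "profinite T \<theta>"
  shows "infinite Q \<Longrightarrow> \<theta> Q = undefined"
    and "finite Q \<Longrightarrow> pi_proj Q T \<theta> \<noteq> {}"
    and "finite Q \<Longrightarrow> finite Q' \<Longrightarrow> partial_surj Q Q' R \<Longrightarrow> (\<theta> Q, \<theta> Q') \<in> lrel Q Q' R T"
  using assms by (simp_all add: profinite_def Dsem_iff_pi_proj_nonempty)

lemma some_mem_pi_proj: "profinite T \<theta> \<Longrightarrow> finite Q \<Longrightarrow> (SOME M. M \<in> pi_proj Q T \<theta>) \<in> pi_proj Q T \<theta>"
  by (simp add: some_in_eq profiniteD(2))

lemma pi_proj_transfer:
  assumes "profinite T \<theta>" "finite Q" "finite Q'" "partial_surj Q Q' R" "M \<in> pi_proj Q T \<theta>"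
  shows "M \<in> pi_proj Q' T \<theta>"
proof -
  from assms(5) have M: "typing [] M T" "interp Q M = \<theta> Q" by (simp_all add: mem_pi_proj)
  have "(\<theta> Q, interp Q' M) \<in> lrel Q Q' R T" using lrel_interp[OF assms(2-4) M(1)] M(2) by simp
  moreover have "(\<theta> Q, \<theta> Q') \<in> lrel Q Q' R T" using profiniteD(3)[OF assms(1-4)] .
  ultimately have "interp Q' M = \<theta> Q'" by (rule single_valuedD[OF single_valued_lrel[OF assms(2,4)]])
  with M(1) show ?thesis by (simp add: mem_pi_proj)
qed

lemma profiniteI:
  assumes "\<And>Q. infinite Q \<Longrightarrow> \<theta> Q = undefined"
    and "\<And>Q. finite Q \<Longrightarrow> \<exists>M. M \<in> pi_proj Q T \<theta> \<and>
           (\<forall>Q' R. finite Q' \<longrightarrow> partial_surj Q Q' R \<longrightarrow> M \<in> pi_proj Q' T \<theta>)"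
  shows "profinite T \<theta>"
  unfolding profinite_def
proof (intro conjI allI impI)
  fix Q :: "nat set"
  show "infinite Q \<Longrightarrow> \<theta> Q = undefined" by (rule assms(1))
  show "finite Q \<Longrightarrow> \<theta> Q \<in> Dsem Q T" unfolding Dsem_iff_pi_proj_nonempty using assms(2) by blast
next
  fix Q Q' :: "nat set" and R assume Q: "finite Q" "finite Q'" "partial_surj Q Q' R"
  with assms(2) obtain M where "M \<in> pi_proj Q T \<theta>" "M \<in> pi_proj Q' T \<theta>" by blast
  then have "typing [] M T" "interp Q M = \<theta> Q" "interp Q' M = \<theta> Q'" by (simp_all add: mem_pi_proj)
  with lrel_interp[OF Q] show "(\<theta> Q, \<theta> Q') \<in> lrel Q Q' R T" by metis
qed

lemma profinite_eqI:
  assumes "profinite T \<theta>" "profinite T \<theta>'" "\<And>Q. finite Q \<Longrightarrow> pi_proj Q T \<theta> = pi_proj Q T \<theta>'"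
  shows "\<theta> = \<theta>'"
proof
  fix Q :: "nat set"
  show "\<theta> Q = \<theta>' Q"
  proof (cases "finite Q")
    case True
    with assms(1) obtain M where M: "M \<in> pi_proj Q T \<theta>" using some_mem_pi_proj by blast
    with True assms(3) have "M \<in> pi_proj Q T \<theta>'" by blast
    with M have "interp Q M = \<theta> Q" "interp Q M = \<theta>' Q" unfolding mem_pi_proj by blast+
    then show ?thesis by (rule trans[OF sym])
  next
    case False
    then have "\<theta> Q = undefined" "\<theta>' Q = undefined" using assms(1,2) by (simp_all add: profiniteD(1))
    then show ?thesis by (rule trans[OF _ sym])
  qed
qed

lemma some_mem_simrel_class: "X \<in> closed_tms T // simrel Q T \<Longrightarrow> (SOME M. M \<in> X) \<in> X"
  by (rule someI_ex) (auto simp: quotient_def closed_tms_def simrel_def)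

lemma pi_proj_eq_simrel_class:
  assumes "X \<in> closed_tms T // simrel Q T" "M \<in> X" "\<theta> Q = interp Q M"
  shows "pi_proj Q T \<theta> = X"
  using assms by (auto simp: quotient_def closed_tms_def simrel_def pi_proj_def)

lemma self_mem_lamcls: "typing [] M T \<Longrightarrow> M \<in> lamcls Q T M"
  by (simp add: lamcls_def simrel_def)

lemma typing_tcomp:
  assumes "typing [] N (TArr B C)" "typing [] M (TArr A B)"
  shows "typing [] (tcomp A N M) (TArr A C)"
proof -
  have "typing [A] N (TArr B C)" "typing [A] M (TArr A B)" "typing [A] (Var 0) A"
    using typing_append[OF assms(1), of "[A]"] typing_append[OF assms(2), of "[A]"]
      typing.t_var[of 0 "[A]"] by simp_all
  then show ?thesis unfolding tcomp_def by (intro typing.intros)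
qed

lemma typing_id: "typing [] (Lam A (Var 0)) (TArr A A)"
  using typing.t_lam[OF typing.t_var[of 0 "[A]"]] by simp

lemma interp_tcomp:
  assumes "typing [] N (TArr B C)" "typing [] M (TArr A B)"
  shows "interp Q (tcomp A N M) = graph_of Q A (\<lambda>x. vapp (interp Q N) (vapp (interp Q M) x))"
  unfolding tcomp_def interp_def[of Q "Lam _ _"] using assms by (simp add: sem_closed)

lemma tcomp_mem_pi_proj_pro_comp:
  assumes "finite Q" "M \<in> pi_proj Q (TArr A B) \<theta>" "N \<in> pi_proj Q (TArr B C) \<psi>"
  shows "tcomp A N M \<in> pi_proj Q (TArr A C) (pro_comp A \<theta> \<psi>)"
proof -
  from assms(2,3) have M: "typing [] M (TArr A B)" "interp Q M = \<theta> Q"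
    and N: "typing [] N (TArr B C)" "interp Q N = \<psi> Q"
    by (simp_all add: mem_pi_proj)
  with assms(1) show ?thesis by (simp add: mem_pi_proj typing_tcomp interp_tcomp pro_comp_def)
qed

lemma id_mem_pi_proj_pro_id: "finite Q \<Longrightarrow> Lam A (Var 0) \<in> pi_proj Q (TArr A A) (pro_id A)"
  by (simp add: mem_pi_proj typing_id interp_def pro_id_def)

section \<open>ProLam as a limit\<close>

lemma pro_comp_mem_ProLam_hom:
  assumes "\<theta> \<in> ProLam_hom A B" "\<psi> \<in> ProLam_hom B C"
  shows "pro_comp A \<theta> \<psi> \<in> ProLam_hom A C"
  unfolding ProLam_hom_def mem_Collect_eq
proof (rule profiniteI)
  from assms have \<theta>: "profinite (TArr A B) \<theta>" and \<psi>: "profinite (TArr B C) \<psi>"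
    by (simp_all add: ProLam_hom_def)
  fix Q :: "nat set"
  show "infinite Q \<Longrightarrow> pro_comp A \<theta> \<psi> Q = undefined" by (simp add: pro_comp_def)
  assume Q: "finite Q"
  obtain M N where M: "M \<in> pi_proj Q (TArr A B) \<theta>" and N: "N \<in> pi_proj Q (TArr B C) \<psi>"
    using some_mem_pi_proj[OF \<theta> Q] some_mem_pi_proj[OF \<psi> Q] by blast
  have "tcomp A N M \<in> pi_proj Q' (TArr A C) (pro_comp A \<theta> \<psi>)"
    if "finite Q'" "partial_surj Q Q' R" for Q' R
    using that(1) pi_proj_transfer[OF \<theta> Q that M] pi_proj_transfer[OF \<psi> Q that N]
    by (rule tcomp_mem_pi_proj_pro_comp)
  with tcomp_mem_pi_proj_pro_comp[OF Q M N]
  show "\<exists>K. K \<in> pi_proj Q (TArr A C) (pro_comp A \<theta> \<psi>) \<and>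
      (\<forall>Q' R. finite Q' \<longrightarrow> partial_surj Q Q' R \<longrightarrow> K \<in> pi_proj Q' (TArr A C) (pro_comp A \<theta> \<psi>))"
    by blast
qed

lemma pro_id_mem_ProLam_hom: "pro_id A \<in> ProLam_hom A A"
  unfolding ProLam_hom_def mem_Collect_eq
proof (rule profiniteI)
  fix Q :: "nat set"
  show "infinite Q \<Longrightarrow> pro_id A Q = undefined" by (simp add: pro_id_def)
  show "finite Q \<Longrightarrow> \<exists>M. M \<in> pi_proj Q (TArr A A) (pro_id A) \<and>
      (\<forall>Q' R. finite Q' \<longrightarrow> partial_surj Q Q' R \<longrightarrow> M \<in> pi_proj Q' (TArr A A) (pro_id A))"
    using id_mem_pi_proj_pro_id by blast
qed

lemma pi_proj_mem_lam_hom: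
  assumes "finite Q" "\<theta> \<in> ProLam_hom A B"
  shows "pi_proj Q (TArr A B) \<theta> \<in> lam_hom Q A B"
proof -
  obtain M where M: "M \<in> pi_proj Q (TArr A B) \<theta>"
    using assms some_mem_pi_proj by (auto simp: ProLam_hom_def)
  then have "M \<in> closed_tms (TArr A B)" by (simp add: mem_pi_proj closed_tms_def)
  then show ?thesis
    unfolding lam_hom_def pi_proj_eq_lamcls[OF M] lamcls_def by (rule quotientI)
qed

lemma pi_proj_pro_comp:
  assumes "finite Q" "\<theta> \<in> ProLam_hom A B" "\<psi> \<in> ProLam_hom B C"
  shows "pi_proj Q (TArr A C) (pro_comp A \<theta> \<psi>) =
    lam_comp Q A B C (pi_proj Q (TArr A B) \<theta>) (pi_proj Q (TArr B C) \<psi>)"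
proof -
  have "(SOME M. M \<in> pi_proj Q (TArr A B) \<theta>) \<in> pi_proj Q (TArr A B) \<theta>"
    and "(SOME N. N \<in> pi_proj Q (TArr B C) \<psi>) \<in> pi_proj Q (TArr B C) \<psi>"
    using assms by (simp_all add: ProLam_hom_def some_mem_pi_proj)
  with assms(1) show ?thesis
    unfolding lam_comp_def by (intro pi_proj_eq_lamcls tcomp_mem_pi_proj_pro_comp)
qed

lemma pi_proj_pro_id: "finite Q \<Longrightarrow> pi_proj Q (TArr A A) (pro_id A) = lam_id Q A"
  unfolding lam_id_def by (intro pi_proj_eq_lamcls id_mem_pi_proj_pro_id)

lemma lam_f_pi_proj:
  assumes "profinite T \<theta>" "finite Q" "finite Q'" "partial_surj Q Q' R"
  shows "lam_f Q' T (pi_proj Q T \<theta>) = pi_proj Q' T \<theta>"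
  unfolding lam_f_def
  using pi_proj_transfer[OF assms some_mem_pi_proj[OF assms(1,2)]]
  by (rule pi_proj_eq_lamcls[symmetric])

lemma ProLam_hom_limit:
  assumes classes: "\<And>Q. finite Q \<Longrightarrow> m Q \<in> lam_hom Q A B"
    and compatible: "\<And>Q Q' R. finite Q \<Longrightarrow> finite Q' \<Longrightarrow> partial_surj Q Q' R \<Longrightarrow>
      lam_f Q' (TArr A B) (m Q) = m Q'"
  shows "\<exists>!\<theta>. \<theta> \<in> ProLam_hom A B \<and> (\<forall>Q. finite Q \<longrightarrow> pi_proj Q (TArr A B) \<theta> = m Q)"
proof -
  define \<theta> where "\<theta> Q = (if finite Q then interp Q (SOME M. M \<in> m Q) else undefined)" for Q
  have M: "(SOME M. M \<in> m Q) \<in> m Q" if "finite Q" for Q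
    using classes[OF that] unfolding lam_hom_def by (rule some_mem_simrel_class)
  have \<pi>: "pi_proj Q (TArr A B) \<theta> = m Q" if "finite Q" for Q
    using classes[OF that] M[OF that] unfolding lam_hom_def
    by (rule pi_proj_eq_simrel_class) (simp add: \<theta>_def that)
  have profinite: "profinite (TArr A B) \<theta>"
  proof (rule profiniteI)
    fix Q :: "nat set"
    show "infinite Q \<Longrightarrow> \<theta> Q = undefined" by (simp add: \<theta>_def)
    assume Q: "finite Q"
    have "(SOME M. M \<in> m Q) \<in> pi_proj Q' (TArr A B) \<theta>"
      if "finite Q'" "partial_surj Q Q' R" for Q' R
    proof -
      have "typing [] (SOME M. M \<in> m Q) (TArr A B)"
        using M[OF Q] unfolding \<pi>[OF Q, symmetric] mem_pi_proj by blast
      then have "(SOME M. M \<in> m Q) \<in> lam_f Q' (TArr A B) (m Q)"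
        unfolding lam_f_def by (rule self_mem_lamcls)
      with compatible[OF Q that] \<pi>[OF that(1)] show ?thesis by simp
    qed
    with M[OF Q] \<pi>[OF Q] show "\<exists>M. M \<in> pi_proj Q (TArr A B) \<theta> \<and>
        (\<forall>Q' R. finite Q' \<longrightarrow> partial_surj Q Q' R \<longrightarrow> M \<in> pi_proj Q' (TArr A B) \<theta>)"
      by auto
  qed
  show ?thesis
  proof (rule ex1I[of _ \<theta>])
    show "\<theta> \<in> ProLam_hom A B \<and> (\<forall>Q. finite Q \<longrightarrow> pi_proj Q (TArr A B) \<theta> = m Q)"
      using profinite \<pi> by (simp add: ProLam_hom_def)
  next
    fix \<theta>' assume "\<theta>' \<in> ProLam_hom A B \<and> (\<forall>Q. finite Q \<longrightarrow> pi_proj Q (TArr A B) \<theta>' = m Q)"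
    with profinite \<pi> show "\<theta>' = \<theta>"
      by (intro profinite_eqI[of "TArr A B"]) (simp_all add: ProLam_hom_def)
  qed
qed

theorem mainTheorem10:
  shows
  "(\<forall>A B C \<theta> \<psi>. \<theta> \<in> ProLam_hom A B \<longrightarrow> \<psi> \<in> ProLam_hom B C \<longrightarrow>
        pro_comp A \<theta> \<psi> \<in> ProLam_hom A C)
 \<and> (\<forall>A. pro_id A \<in> ProLam_hom A A)
 \<and> (\<forall>Q A B \<theta>. finite Q \<longrightarrow> \<theta> \<in> ProLam_hom A B \<longrightarrow>
        pi_proj Q (TArr A B) \<theta> \<in> lam_hom Q A B)
 \<and> (\<forall>Q A B C \<theta> \<psi>. finite Q \<longrightarrow> \<theta> \<in> ProLam_hom A B \<longrightarrow> \<psi> \<in> ProLam_hom B C \<longrightarrow>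
        pi_proj Q (TArr A C) (pro_comp A \<theta> \<psi>) =
        lam_comp Q A B C (pi_proj Q (TArr A B) \<theta>) (pi_proj Q (TArr B C) \<psi>))
 \<and> (\<forall>Q A. finite Q \<longrightarrow> pi_proj Q (TArr A A) (pro_id A) = lam_id Q A)
 \<and> (\<forall>Q Q' R A B \<theta>. finite Q \<longrightarrow> finite Q' \<longrightarrow> partial_surj Q Q' R \<longrightarrow> \<theta> \<in> ProLam_hom A B \<longrightarrow>
        lam_f Q' (TArr A B) (pi_proj Q (TArr A B) \<theta>) = pi_proj Q' (TArr A B) \<theta>)
 \<and> (\<forall>A B (m :: nat set \<Rightarrow> tm set).
        (\<forall>Q. finite Q \<longrightarrow> m Q \<in> lam_hom Q A B) \<longrightarrow>
        (\<forall>Q Q' R. finite Q \<longrightarrow> finite Q' \<longrightarrow> partial_surj Q Q' R \<longrightarrow>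
                  lam_f Q' (TArr A B) (m Q) = m Q') \<longrightarrow>
        (\<exists>!\<theta>. \<theta> \<in> ProLam_hom A B \<and> (\<forall>Q. finite Q \<longrightarrow> pi_proj Q (TArr A B) \<theta> = m Q)))"
  by (intro conjI allI impI pro_comp_mem_ProLam_hom pro_id_mem_ProLam_hom pi_proj_mem_lam_hom
      pi_proj_pro_comp pi_proj_pro_id lam_f_pi_proj ProLam_hom_limit)
    (auto simp: ProLam_hom_def)

end
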